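(* Let $C<D$, let $\psi_1,\psi_2:[C,D]\to\mathbb{R}$ be $C^1$ with $\psi_1<\psi_2$, and let $a=\{(y,\theta)\in\mathbb{R}\times[C,D]:\psi_1(\theta)\le y\le\psi_2(\theta)\}$. Set $M(\theta)=\max\{|\psi_1'(\theta)|,|\psi_2'(\theta)|\}$. Then for every $C^1$ function $v:\mathbb{R}^2\to\mathbb{R}$, $$\int_{\partial a}|v|\le2\Big\{(D-C)^{-1}+\big|((1+M^2)^{1/2}+2M)/(\psi_2-\psi_1)\big|_\infty\Big\}|1_av|_1+\sqrt2\big((1+|M|_\infty^2)^{1/2}+|M|_\infty\big)|1_a\nabla v|_1.$$
   Context: $\int_{\partial a}$ is with respect to one-dimensional (arclength) Lebesgue measure on $\partial a$; $|1_av|_1=\int_a|v|\,d\lambda_2$ and $|1_a\nabla v|_1=\int_a|\nabla v|\,d\lambda_2$ with $\lambda_2$ two-dimensional Lebesgue measure and $|\nabla v|$ the Euclidean norm of the gradient; $|\cdot|_\infty$ denotes supremum over $\theta\in[C,D]$. *)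

theory Defs
  imports "HOL-Analysis.Analysis"
begin

definition arclength_integral ::
  "(real \<times> real \<Rightarrow> real) \<Rightarrow> (real \<Rightarrow> real \<times> real) \<Rightarrow> real \<Rightarrow> real \<Rightarrow> real" where
  "arclength_integral f g s t =
     integral {s..t} (\<lambda>r. f (g r) * norm (vector_derivative g (at r within {s..t})))"

definition region :: "(real \<Rightarrow> real) \<Rightarrow> (real \<Rightarrow> real) \<Rightarrow> real \<Rightarrow> real \<Rightarrow> (real \<times> real) set" where
  "region \<psi>1 \<psi>2 C D = {(y, \<theta>). C \<le> \<theta> \<and> \<theta> \<le> D \<and> \<psi>1 \<theta> \<le> y \<and> y \<le> \<psi>2 \<theta>}"

definition boundary_integral ::
  "(real \<Rightarrow> real) \<Rightarrow> (real \<Rightarrow> real) \<Rightarrow> real \<Rightarrow> real \<Rightarrow> (real \<times> real \<Rightarrow> real) \<Rightarrow> real" where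
  "boundary_integral \<psi>1 \<psi>2 C D f =
      arclength_integral f (\<lambda>\<theta>. (\<psi>1 \<theta>, \<theta>)) C D
    + arclength_integral f (\<lambda>\<theta>. (\<psi>2 \<theta>, \<theta>)) C D
    + arclength_integral f (\<lambda>y. (y, C)) (\<psi>1 C) (\<psi>2 C)
    + arclength_integral f (\<lambda>y. (y, D)) (\<psi>1 D) (\<psi>2 D)"

definition grad_norm :: "((real \<times> real) \<Rightarrow>\<^sub>L real) \<Rightarrow> real" where
  "grad_norm L = sqrt ((blinfun_apply L (1, 0))\<^sup>2 + (blinfun_apply L (0, 1))\<^sup>2)"

end

theory Submission
  imports Defs
begin

text \<open>Parametrise the region by \<open>P t \<theta> = (\<psi>1 \<theta> + t h \<theta>, \<theta>)\<close> on \<open>[0,1] \<times> [C,D]\<close>, where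
  \<open>h = \<psi>2 - \<psi>1\<close> is the Jacobian. Each boundary piece is controlled by the one-dimensional trace
  inequality \<open>\<bar>f p\<bar> + \<bar>f q\<bar> \<le> 2/(q-p) \<integral>\<bar>f\<bar> + \<integral>\<bar>f'\<bar>\<close>: the two graphs through \<open>f = v (P \<cdot> \<theta>)\<close> on
  \<open>[0,1]\<close>, their arclength factors \<open>sqrt (1 + \<psi>i'\<^sup>2)\<close> being at most \<open>sqrt (1 + M\<^sup>2)\<close>; the two
  sides \<open>\<theta> = C, D\<close>, rescaled to \<open>[0,1]\<close>, through \<open>f = h \<cdot> v (P t \<cdot>)\<close> on \<open>[C,D]\<close>, where
  \<open>\<bar>\<partial>\<^sub>\<theta>(h \<cdot> v \<circ> P)\<bar> \<le> 2M\<bar>v\<bar> + h(M\<bar>\<partial>\<^sub>yv\<bar> + \<bar>\<partial>\<^sub>\<theta>v\<bar>)\<close>. All resulting densities on the rectangle are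
  pointwise at most \<open>h \<cdot> (F \<circ> P)\<close>, where \<open>F\<close> is the integrand \<open>K\<^sub>1\<bar>v\<bar> + K\<^sub>2\<bar>\<nabla>v\<bar>\<close> of the right-hand
  side, and the rectangle integral of \<open>h \<cdot> (F \<circ> P)\<close> is the region integral of \<open>F\<close>.\<close>

lemma abs_diff_le_integral_abs_deriv:
  fixes f f' :: "real \<Rightarrow> real"
  assumes "u \<le> w"
    and f': "\<And>x. x \<in> {u..w} \<Longrightarrow> (f has_real_derivative f' x) (at x within {u..w})"
    and f'_cont: "continuous_on {u..w} f'"
  shows "\<bar>f w - f u\<bar> \<le> integral {u..w} (\<lambda>x. \<bar>f' x\<bar>)"
proof -
  have "(f' has_integral (f w - f u)) {u..w}"
    using assms(1) f' by (intro fundamental_theorem_of_calculus)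
      (auto simp: has_real_derivative_iff_has_vector_derivative[symmetric])
  then have "f w - f u = integral {u..w} f'"
    by (simp add: integral_unique)
  also have "\<bar>\<dots>\<bar> \<le> integral {u..w} (\<lambda>x. \<bar>f' x\<bar>)"
    using integral_norm_bound_integral[of f' "{u..w}" "\<lambda>x. \<bar>f' x\<bar>"]
    by (simp add: integrable_continuous_interval continuous_on_rabs f'_cont)
  finally show ?thesis .
qed

lemma abs_endpoints_le_integral:
  fixes f f' :: "real \<Rightarrow> real"
  assumes "p < q"
    and f': "\<And>x. x \<in> {p..q} \<Longrightarrow> (f has_real_derivative f' x) (at x within {p..q})"
    and f'_cont: "continuous_on {p..q} f'"
  shows "\<bar>f p\<bar> + \<bar>f q\<bar>
    \<le> 2 / (q - p) * integral {p..q} (\<lambda>x. \<bar>f x\<bar>) + integral {p..q} (\<lambda>x. \<bar>f' x\<bar>)"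
proof -
  define I where "I = integral {p..q} (\<lambda>x. \<bar>f' x\<bar>)"
  have f_cont: "continuous_on {p..q} f"
    using f' by (rule DERIV_continuous_on)
  have pointwise: "\<bar>f p\<bar> + \<bar>f q\<bar> \<le> 2 * \<bar>f y\<bar> + I" if y: "y \<in> {p..q}" for y
  proof -
    have "integral {p..y} (\<lambda>x. \<bar>f' x\<bar>) + integral {y..q} (\<lambda>x. \<bar>f' x\<bar>) = I"
      unfolding I_def using y
      by (intro Henstock_Kurzweil_Integration.integral_combine integrable_continuous_interval
          continuous_intros f'_cont) auto
    moreover have "\<bar>f y - f p\<bar> \<le> integral {p..y} (\<lambda>x. \<bar>f' x\<bar>)"
      using y by (intro abs_diff_le_integral_abs_deriv continuous_on_subset[OF f'_cont])
        (auto intro: DERIV_subset[OF f'])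
    moreover have "\<bar>f q - f y\<bar> \<le> integral {y..q} (\<lambda>x. \<bar>f' x\<bar>)"
      using y by (intro abs_diff_le_integral_abs_deriv continuous_on_subset[OF f'_cont])
        (auto intro: DERIV_subset[OF f'])
    ultimately show ?thesis by linarith
  qed
  have "(q - p) * (\<bar>f p\<bar> + \<bar>f q\<bar>) = integral {p..q} (\<lambda>y. \<bar>f p\<bar> + \<bar>f q\<bar>)"
    using assms(1) by simp
  also have "\<dots> \<le> integral {p..q} (\<lambda>y. 2 * \<bar>f y\<bar> + I)"
    by (intro integral_le pointwise integrable_continuous_interval continuous_intros f_cont) auto
  also have "\<dots> = 2 * integral {p..q} (\<lambda>y. \<bar>f y\<bar>) + (q - p) * I"
    using assms(1)
    by (subst integral_add) (auto intro!: integrable_continuous_interval continuous_intros f_cont)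
  finally have "\<bar>f p\<bar> + \<bar>f q\<bar> \<le> (2 * integral {p..q} (\<lambda>y. \<bar>f y\<bar>) + (q - p) * I) / (q - p)"
    using assms(1) by (simp add: pos_le_divide_eq mult.commute)
  also have "\<dots> = 2 / (q - p) * integral {p..q} (\<lambda>y. \<bar>f y\<bar>) + I"
    using assms(1) by (simp add: field_simps)
  finally show ?thesis
    unfolding I_def .
qed

lemma has_real_derivative_comp_curve:
  fixes v :: "'a::real_normed_vector \<Rightarrow> real"
  assumes "(v has_derivative Dv) (at (g t))"
    and "(g has_vector_derivative g') (at t within S)"
  shows "((\<lambda>s. v (g s)) has_real_derivative Dv g') (at t within S)"
proof -
  have "((\<lambda>s. v (g s)) has_derivative (\<lambda>s. Dv (s *\<^sub>R g'))) (at t within S)"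
    using has_derivative_compose[OF assms(2)[unfolded has_vector_derivative_def] assms(1)] .
  moreover have "(\<lambda>s. Dv (s *\<^sub>R g')) = (*) (Dv g')"
    using linear_scale[OF has_derivative_linear[OF assms(1)]] by (auto simp: fun_eq_iff)
  ultimately show ?thesis
    unfolding has_field_derivative_def by simp
qed

lemma arclength_integral_graph:
  fixes \<psi> \<psi>' :: "real \<Rightarrow> real"
  assumes "C < D"
    and \<psi>': "\<And>\<theta>. \<theta> \<in> {C..D} \<Longrightarrow> (\<psi> has_real_derivative \<psi>' \<theta>) (at \<theta> within {C..D})"
  shows "arclength_integral f (\<lambda>\<theta>. (\<psi> \<theta>, \<theta>)) C D
    = integral {C..D} (\<lambda>\<theta>. f (\<psi> \<theta>, \<theta>) * sqrt ((\<psi>' \<theta>)\<^sup>2 + 1))"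
  unfolding arclength_integral_def
proof (rule integral_cong)
  fix \<theta> assume \<theta>: "\<theta> \<in> {C..D}"
  have "((\<lambda>\<theta>. (\<psi> \<theta>, \<theta>)) has_vector_derivative (\<psi>' \<theta>, 1)) (at \<theta> within {C..D})"
    by (intro has_vector_derivative_Pair has_vector_derivative_id
        has_real_derivative_iff_has_vector_derivative[THEN iffD1] \<psi>' \<theta>)
  then have "vector_derivative (\<lambda>\<theta>. (\<psi> \<theta>, \<theta>)) (at \<theta> within {C..D}) = (\<psi>' \<theta>, 1)"
    by (rule vector_derivative_within_closed_interval[OF assms(1) \<theta>])
  then show "f (\<psi> \<theta>, \<theta>) * norm (vector_derivative (\<lambda>\<theta>. (\<psi> \<theta>, \<theta>)) (at \<theta> within {C..D}))
      = f (\<psi> \<theta>, \<theta>) * sqrt ((\<psi>' \<theta>)\<^sup>2 + 1)"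
    by (simp add: norm_Pair)
qed

lemma arclength_integral_segment_fst:
  assumes "p < q"
  shows "arclength_integral f (\<lambda>y. (y, c)) p q = integral {p..q} (\<lambda>y. f (y, c))"
  unfolding arclength_integral_def
proof (rule integral_cong)
  fix y assume y: "y \<in> {p..q}"
  have "((\<lambda>y. (y, c)) has_vector_derivative (1, 0)) (at y within {p..q})"
    by (intro has_vector_derivative_Pair has_vector_derivative_id has_vector_derivative_const)
  then have "vector_derivative (\<lambda>y. (y, c)) (at y within {p..q}) = (1, 0)"
    by (rule vector_derivative_within_closed_interval[OF assms y])
  then show "f (y, c) * norm (vector_derivative (\<lambda>y. (y, c)) (at y within {p..q})) = f (y, c)"
    by (simp add: norm_Pair)
qed

lemma integral_Icc_rescale_unit:
  fixes g :: "real \<Rightarrow> real"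
  assumes "p \<le> q" and "continuous_on {p..q} g"
  shows "integral {p..q} g = (q - p) * integral {0..1} (\<lambda>t. g (p + t * (q - p)))"
proof -
  have "((\<lambda>t. (q - p) *\<^sub>R g (p + t * (q - p))) has_integral
      integral {p + 0 * (q - p)..p + 1 * (q - p)} g) {0..1}"
  proof (rule has_integral_substitution)
    show "(\<lambda>t. p + t * (q - p)) ` {0..1} \<subseteq> {p..q}"
    proof clarify
      fix t :: real assume t: "t \<in> {0..1}"
      then have "t * (q - p) \<le> q - p"
        using assms(1) by (intro mult_left_le_one_le) auto
      then show "p + t * (q - p) \<in> {p..q}"
        using t assms(1) by auto
    qed
    show "((\<lambda>t. p + t * (q - p)) has_real_derivative q - p) (at t within {0..1})" for t
      by (auto intro!: derivative_eq_intros)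
  qed (use assms in auto)
  then have "integral {0..1} (\<lambda>t. (q - p) * g (p + t * (q - p))) = integral {p..q} g"
    by (intro integral_unique) simp
  then show ?thesis
    by simp
qed

lemma weighted_abs_add_le_sqrt2_norm:
  fixes B a b :: real
  assumes "1 \<le> B"
  shows "B * \<bar>a\<bar> + \<bar>b\<bar> \<le> sqrt 2 * B * sqrt (a\<^sup>2 + b\<^sup>2)"
proof -
  have "0 \<le> (B * \<bar>a\<bar> - \<bar>b\<bar>)\<^sup>2"
    by simp
  then have "2 * (B * \<bar>a\<bar>) * \<bar>b\<bar> \<le> (B * \<bar>a\<bar>)\<^sup>2 + \<bar>b\<bar>\<^sup>2"
    by (simp add: power2_diff)
  moreover have "b\<^sup>2 \<le> B\<^sup>2 * b\<^sup>2"
    using assms by (simp add: mult_le_cancel_right1 one_le_power)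
  ultimately have "(B * \<bar>a\<bar> + \<bar>b\<bar>)\<^sup>2 \<le> 2 * B\<^sup>2 * (a\<^sup>2 + b\<^sup>2)"
    by (simp add: power2_sum power_mult_distrib algebra_simps)
  then have "B * \<bar>a\<bar> + \<bar>b\<bar> \<le> sqrt (2 * B\<^sup>2 * (a\<^sup>2 + b\<^sup>2))"
    by (rule real_le_rsqrt)
  also have "\<dots> = sqrt 2 * B * sqrt (a\<^sup>2 + b\<^sup>2)"
    using assms by (simp add: real_sqrt_mult)
  finally show ?thesis .
qed

lemma le_SUP_abs_continuous_on_Icc:
  fixes f :: "real \<Rightarrow> real"
  assumes "continuous_on {a..b} f" and "x \<in> {a..b}"
  shows "f x \<le> (SUP y\<in>{a..b}. \<bar>f y\<bar>)"
proof -
  have "bdd_above ((\<lambda>y. \<bar>f y\<bar>) ` {a..b})"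
    by (intro bounded_imp_bdd_above compact_imp_bounded compact_continuous_image
        continuous_intros assms(1) compact_Icc)
  then show ?thesis
    using cSUP_upper[OF assms(2)] abs_ge_self order_trans by blast
qed

lemma continuous_on_integral_Icc_snd:
  fixes G :: "real \<Rightarrow> real \<Rightarrow> real"
  assumes "continuous_on ({a..b} \<times> {c..d}) (\<lambda>p. G (fst p) (snd p))"
  shows "continuous_on {a..b} (\<lambda>x. integral {c..d} (G x))"
  using integral_continuous_on_param[of "{a..b}" c d G] assms
  by (simp add: cbox_interval case_prod_beta')

lemma continuous_on_integral_Icc_fst:
  fixes G :: "real \<Rightarrow> real \<Rightarrow> real"
  assumes "continuous_on ({a..b} \<times> {c..d}) (\<lambda>p. G (fst p) (snd p))"
  shows "continuous_on {c..d} (\<lambda>y. integral {a..b} (\<lambda>x. G x y))"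
proof -
  have "continuous_on ({c..d} \<times> {a..b}) (\<lambda>p. G (snd p) (fst p))"
    using continuous_on_swap_args[of "{a..b}" "{c..d}" G] assms
    by (simp add: case_prod_beta')
  then show ?thesis
    by (rule continuous_on_integral_Icc_snd)
qed

lemma continuous_on_Icc_slice:
  fixes G :: "real \<Rightarrow> real \<Rightarrow> real"
  assumes "continuous_on ({a..b} \<times> {c..d}) (\<lambda>p. G (fst p) (snd p))" and "y \<in> {c..d}"
  shows "continuous_on {a..b} (\<lambda>x. G x y)"
proof -
  have "continuous_on {a..b} (\<lambda>x. (x, y))" and "(\<lambda>x. (x, y)) ` {a..b} \<subseteq> {a..b} \<times> {c..d}"
    using assms(2) by (auto intro!: continuous_intros)
  from continuous_on_compose2[OF assms(1) this] show ?thesis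
    by simp
qed

lemma integral_Icc_swap:
  fixes G :: "real \<Rightarrow> real \<Rightarrow> real"
  assumes "continuous_on ({a..b} \<times> {c..d}) (\<lambda>p. G (fst p) (snd p))"
  shows "integral {a..b} (\<lambda>x. integral {c..d} (G x)) = integral {c..d} (\<lambda>y. integral {a..b} (\<lambda>x. G x y))"
proof -
  have "continuous_on (cbox (a, c) (b, d)) (\<lambda>(x, y). G x y)"
    unfolding cbox_Pair_eq using assms by (simp add: cbox_interval case_prod_beta')
  from integral_swap_continuous[OF this] show ?thesis
    by (simp add: cbox_interval)
qed

section \<open>The region as the image of a rectangle\<close>

locale C1_strip =
  fixes C D :: real
    and \<psi>1 \<psi>2 \<psi>1' \<psi>2' :: "real \<Rightarrow> real"
  assumes CD: "C < D"
    and \<psi>1_deriv: "\<And>\<theta>. \<theta> \<in> {C..D} \<Longrightarrow> (\<psi>1 has_real_derivative \<psi>1' \<theta>) (at \<theta> within {C..D})"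
    and \<psi>1'_cont: "continuous_on {C..D} \<psi>1'"
    and \<psi>2_deriv: "\<And>\<theta>. \<theta> \<in> {C..D} \<Longrightarrow> (\<psi>2 has_real_derivative \<psi>2' \<theta>) (at \<theta> within {C..D})"
    and \<psi>2'_cont: "continuous_on {C..D} \<psi>2'"
    and \<psi>1_less_\<psi>2: "\<And>\<theta>. \<theta> \<in> {C..D} \<Longrightarrow> \<psi>1 \<theta> < \<psi>2 \<theta>"
begin

definition h :: "real \<Rightarrow> real" where
  "h \<theta> = \<psi>2 \<theta> - \<psi>1 \<theta>"

definition P :: "real \<Rightarrow> real \<Rightarrow> real \<times> real" where
  "P t \<theta> = (\<psi>1 \<theta> + t * h \<theta>, \<theta>)"

definition M :: "real \<Rightarrow> real" where
  "M \<theta> = max \<bar>\<psi>1' \<theta>\<bar> \<bar>\<psi>2' \<theta>\<bar>"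

lemma \<psi>1_cont: "continuous_on {C..D} \<psi>1"
  using \<psi>1_deriv by (rule DERIV_continuous_on)

lemma \<psi>2_cont: "continuous_on {C..D} \<psi>2"
  using \<psi>2_deriv by (rule DERIV_continuous_on)

lemma h_cont: "continuous_on {C..D} h"
  unfolding h_def by (intro continuous_intros \<psi>1_cont \<psi>2_cont)

lemma h_pos: "\<theta> \<in> {C..D} \<Longrightarrow> 0 < h \<theta>"
  using \<psi>1_less_\<psi>2 by (simp add: h_def)

lemma h_has_real_derivative:
  "\<theta> \<in> {C..D} \<Longrightarrow> (h has_real_derivative \<psi>2' \<theta> - \<psi>1' \<theta>) (at \<theta> within {C..D})"
  unfolding h_def by (intro derivative_intros \<psi>1_deriv \<psi>2_deriv)

lemma M_cont: "continuous_on {C..D} M"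
  unfolding M_def by (intro continuous_intros \<psi>1'_cont \<psi>2'_cont)

lemma abs_convex_slope_le_M:
  assumes "t \<in> {0..1}"
  shows "\<bar>(1 - t) * \<psi>1' \<theta> + t * \<psi>2' \<theta>\<bar> \<le> M \<theta>"
proof -
  have "\<bar>(1 - t) * \<psi>1' \<theta> + t * \<psi>2' \<theta>\<bar> \<le> (1 - t) * \<bar>\<psi>1' \<theta>\<bar> + t * \<bar>\<psi>2' \<theta>\<bar>"
    using assms abs_triangle_ineq[of "(1 - t) * \<psi>1' \<theta>" "t * \<psi>2' \<theta>"] by (simp add: abs_mult)
  also have "\<dots> \<le> (1 - t) * M \<theta> + t * M \<theta>"
    using assms unfolding M_def by (intro add_mono mult_left_mono) auto
  finally show ?thesis
    by (simp add: algebra_simps)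
qed

lemma P_has_vector_derivative_t:
  "((\<lambda>t. P t \<theta>) has_vector_derivative (h \<theta>, 0)) (at t within S)"
  unfolding P_def
  by (intro derivative_eq_intros has_real_derivative_iff_has_vector_derivative[THEN iffD1]) auto

lemma P_has_vector_derivative_\<theta>:
  assumes "\<theta> \<in> {C..D}"
  shows "((\<lambda>\<theta>. P t \<theta>) has_vector_derivative ((1 - t) * \<psi>1' \<theta> + t * \<psi>2' \<theta>, 1))
    (at \<theta> within {C..D})"
proof -
  have "((\<lambda>\<theta>. \<psi>1 \<theta> + t * h \<theta>) has_real_derivative (1 - t) * \<psi>1' \<theta> + t * \<psi>2' \<theta>)
      (at \<theta> within {C..D})"
    unfolding h_def using \<psi>1_deriv[OF assms] \<psi>2_deriv[OF assms]
    by (auto intro!: derivative_eq_intros simp: algebra_simps)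
  then show ?thesis
    unfolding P_def
    by (intro has_vector_derivative_Pair has_vector_derivative_id
        has_real_derivative_iff_has_vector_derivative[THEN iffD1])
qed

lemma continuous_on_rectangle_P:
  "continuous_on UNIV U \<Longrightarrow> continuous_on ({0..1} \<times> {C..D}) (\<lambda>p. U (P (fst p) (snd p)))"
  unfolding P_def
  by (rule continuous_on_compose2[where t = UNIV])
    (auto intro!: continuous_intros continuous_on_compose2[OF h_cont] continuous_on_compose2[OF \<psi>1_cont])

lemma continuous_on_P_slice_t:
  "continuous_on UNIV U \<Longrightarrow> continuous_on {0..1} (\<lambda>t. U (P t \<theta>))"
  unfolding P_def by (rule continuous_on_compose2[where t = UNIV]) (auto intro!: continuous_intros)

lemma continuous_on_P_slice_\<theta>:
  "continuous_on UNIV U \<Longrightarrow> continuous_on {C..D} (\<lambda>\<theta>. U (P t \<theta>))"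
  unfolding P_def
  by (rule continuous_on_compose2[where t = UNIV]) (auto intro!: continuous_intros \<psi>1_cont h_cont)

lemma continuous_on_rectangle_snd:
  "continuous_on {C..D} \<phi> \<Longrightarrow> continuous_on ({0..1} \<times> {C..D}) (\<lambda>p. \<phi> (snd p))"
  by (rule continuous_on_compose2[OF _ continuous_on_snd]) auto

lemma region_eq_image_P:
  "region \<psi>1 \<psi>2 C D = (\<lambda>p. P (fst p) (snd p)) ` ({0..1} \<times> {C..D})"
proof (intro set_eqI iffI)
  fix x assume "x \<in> region \<psi>1 \<psi>2 C D"
  then obtain y \<theta> where x: "x = (y, \<theta>)" and \<theta>: "\<theta> \<in> {C..D}" and y: "\<psi>1 \<theta> \<le> y" "y \<le> \<psi>2 \<theta>"
    by (auto simp: region_def)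
  define t where "t = (y - \<psi>1 \<theta>) / h \<theta>"
  have "t \<in> {0..1}" and "x = P t \<theta>"
    using h_pos[OF \<theta>] x y by (auto simp: t_def P_def h_def field_simps)
  with \<theta> show "x \<in> (\<lambda>p. P (fst p) (snd p)) ` ({0..1} \<times> {C..D})"
    by (intro image_eqI[of _ _ "(t, \<theta>)"]) auto
next
  fix x assume "x \<in> (\<lambda>p. P (fst p) (snd p)) ` ({0..1} \<times> {C..D})"
  then obtain t \<theta> where x: "x = P t \<theta>" and t: "t \<in> {0..1}" and \<theta>: "\<theta> \<in> {C..D}"
    by auto
  have "t * h \<theta> \<le> h \<theta>"
    using t h_pos[OF \<theta>] by (intro mult_left_le_one_le) auto
  moreover have "0 \<le> t * h \<theta>"
    using t h_pos[OF \<theta>] by auto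
  ultimately show "x \<in> region \<psi>1 \<psi>2 C D"
    using x \<theta> by (auto simp: region_def P_def h_def)
qed

lemma compact_region: "compact (region \<psi>1 \<psi>2 C D)"
  unfolding region_eq_image_P
  by (intro compact_continuous_image compact_Times compact_Icc
      continuous_on_rectangle_P[of "\<lambda>x. x", simplified])

lemma integral_region_slice:
  fixes F :: "real \<times> real \<Rightarrow> real"
  assumes F_cont: "continuous_on UNIV F"
  shows "(\<integral>y. indicator (region \<psi>1 \<psi>2 C D) (y, \<theta>) *\<^sub>R F (y, \<theta>) \<partial>lborel)
    = indicator {C..D} \<theta> * integral {\<psi>1 \<theta>..\<psi>2 \<theta>} (\<lambda>y. F (y, \<theta>))"
proof (cases "\<theta> \<in> {C..D}")
  case True
  have "(\<lambda>y. indicator (region \<psi>1 \<psi>2 C D) (y, \<theta>) *\<^sub>R F (y, \<theta>))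
      = (\<lambda>y. indicator {\<psi>1 \<theta>..\<psi>2 \<theta>} y *\<^sub>R F (y, \<theta>))"
    using True by (auto simp: region_def indicator_def fun_eq_iff)
  then have "(\<integral>y. indicator (region \<psi>1 \<psi>2 C D) (y, \<theta>) *\<^sub>R F (y, \<theta>) \<partial>lborel)
      = (LINT y:{\<psi>1 \<theta>..\<psi>2 \<theta>}|lborel. F (y, \<theta>))"
    by (simp add: set_lebesgue_integral_def)
  also have "\<dots> = integral {\<psi>1 \<theta>..\<psi>2 \<theta>} (\<lambda>y. F (y, \<theta>))"
  proof (rule set_borel_integral_eq_integral(2))
    have "continuous_on UNIV (\<lambda>y. F (y, \<theta>))"
      by (rule continuous_on_compose2[OF F_cont]) (auto intro!: continuous_intros)
    then show "set_integrable lborel {\<psi>1 \<theta>..\<psi>2 \<theta>} (\<lambda>y. F (y, \<theta>))"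
      unfolding set_integrable_def
      by (intro borel_integrable_compact) (auto intro: continuous_on_subset)
  qed
  finally show ?thesis
    using True by simp
next
  case False
  then have "(\<lambda>y. indicator (region \<psi>1 \<psi>2 C D) (y, \<theta>) *\<^sub>R F (y, \<theta>)) = (\<lambda>y. 0)"
    by (auto simp: region_def indicator_def fun_eq_iff)
  with False show ?thesis
    by simp
qed

lemma integral_region_iterated:
  fixes F :: "real \<times> real \<Rightarrow> real"
  assumes F_cont: "continuous_on UNIV F"
  shows "(LINT x:region \<psi>1 \<psi>2 C D|lborel. F x)
    = integral {C..D} (\<lambda>\<theta>. integral {\<psi>1 \<theta>..\<psi>2 \<theta>} (\<lambda>y. F (y, \<theta>)))"
proof -
  define a where "a = region \<psi>1 \<psi>2 C D"
  define G where "G \<theta> = integral {\<psi>1 \<theta>..\<psi>2 \<theta>} (\<lambda>y. F (y, \<theta>))" for \<theta>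
  define f where "f y \<theta> = indicator a (y, \<theta>) *\<^sub>R F (y, \<theta>)" for y \<theta>
  have f_eq: "case_prod f = (\<lambda>x. indicator a x *\<^sub>R F x)"
    by (auto simp: f_def fun_eq_iff)
  have "integrable lborel (\<lambda>x. indicator a x *\<^sub>R F x)"
    unfolding a_def using compact_region
    by (rule borel_integrable_compact) (auto intro: continuous_on_subset[OF F_cont])
  then have f_int: "integrable (lborel \<Otimes>\<^sub>M lborel) (case_prod f)"
    by (simp add: f_eq lborel_prod)
  have inner: "(\<integral>y. f y \<theta> \<partial>lborel) = indicator {C..D} \<theta> * G \<theta>" for \<theta>
    unfolding f_def a_def G_def by (rule integral_region_slice[OF F_cont])
  have "(LINT x:a|lborel. F x) = integral\<^sup>L (lborel \<Otimes>\<^sub>M lborel) (case_prod f)"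
    by (simp add: set_lebesgue_integral_def f_eq lborel_prod)
  also have "\<dots> = (\<integral>\<theta>. (\<integral>y. f y \<theta> \<partial>lborel) \<partial>lborel)"
    by (rule lborel_pair.integral_snd[OF f_int, symmetric])
  also have "\<dots> = (LINT \<theta>:{C..D}|lborel. G \<theta>)"
    by (simp add: inner set_lebesgue_integral_def)
  also have "\<dots> = integral {C..D} G"
  proof (rule set_borel_integral_eq_integral(2))
    show "set_integrable lborel {C..D} G"
      using lborel_pair.integrable_snd[OF f_int] by (simp add: inner set_integrable_def)
  qed
  finally show ?thesis
    unfolding a_def G_def .
qed

lemma integral_region_P:
  fixes F :: "real \<times> real \<Rightarrow> real"
  assumes F_cont: "continuous_on UNIV F"
  shows "(LINT x:region \<psi>1 \<psi>2 C D|lborel. F x)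
    = integral {C..D} (\<lambda>\<theta>. h \<theta> * integral {0..1} (\<lambda>t. F (P t \<theta>)))"
  unfolding integral_region_iterated[OF F_cont]
proof (rule integral_cong)
  fix \<theta> assume \<theta>: "\<theta> \<in> {C..D}"
  have "continuous_on {\<psi>1 \<theta>..\<psi>2 \<theta>} (\<lambda>y. F (y, \<theta>))"
    by (rule continuous_on_compose2[OF F_cont]) (auto intro!: continuous_intros)
  with h_pos[OF \<theta>] show "integral {\<psi>1 \<theta>..\<psi>2 \<theta>} (\<lambda>y. F (y, \<theta>)) = h \<theta> * integral {0..1} (\<lambda>t. F (P t \<theta>))"
    by (subst integral_Icc_rescale_unit) (auto simp: P_def h_def)
qed

lemma set_integral_region_lincomb:
  fixes f g :: "real \<times> real \<Rightarrow> real"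
  assumes "continuous_on UNIV f" and "continuous_on UNIV g"
  shows "(LINT x:region \<psi>1 \<psi>2 C D|lborel. a * f x + b * g x)
    = a * (LINT x:region \<psi>1 \<psi>2 C D|lborel. f x) + b * (LINT x:region \<psi>1 \<psi>2 C D|lborel. g x)"
proof -
  have "set_integrable lborel (region \<psi>1 \<psi>2 C D) (\<lambda>x. a * f x)"
    and "set_integrable lborel (region \<psi>1 \<psi>2 C D) (\<lambda>x. b * g x)"
    unfolding set_integrable_def using assms
    by (intro borel_integrable_compact compact_region continuous_intros; auto intro: continuous_on_subset)+
  then show ?thesis
    by (simp add: set_integral_add)
qed

lemma boundary_integral_eq:
  "boundary_integral \<psi>1 \<psi>2 C D f
    = integral {C..D} (\<lambda>\<theta>. f (\<psi>1 \<theta>, \<theta>) * sqrt ((\<psi>1' \<theta>)\<^sup>2 + 1))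
      + integral {C..D} (\<lambda>\<theta>. f (\<psi>2 \<theta>, \<theta>) * sqrt ((\<psi>2' \<theta>)\<^sup>2 + 1))
      + integral {\<psi>1 C..\<psi>2 C} (\<lambda>y. f (y, C)) + integral {\<psi>1 D..\<psi>2 D} (\<lambda>y. f (y, D))"
  using CD \<psi>1_less_\<psi>2[of C] \<psi>1_less_\<psi>2[of D]
    arclength_integral_graph[OF CD \<psi>1_deriv, of f] arclength_integral_graph[OF CD \<psi>2_deriv, of f]
  by (simp add: boundary_integral_def arclength_integral_segment_fst)

end

section \<open>Trace estimates\<close>

locale C1_strip_function = C1_strip +
  fixes v :: "real \<times> real \<Rightarrow> real"
    and v' :: "real \<times> real \<Rightarrow> ((real \<times> real) \<Rightarrow>\<^sub>L real)"
  assumes v_deriv: "\<And>x. (v has_derivative blinfun_apply (v' x)) (at x)"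
    and v'_cont: "continuous_on UNIV v'"
begin

definition v_y :: "real \<times> real \<Rightarrow> real" where
  "v_y x = blinfun_apply (v' x) (1, 0)"

definition v_\<theta> :: "real \<times> real \<Rightarrow> real" where
  "v_\<theta> x = blinfun_apply (v' x) (0, 1)"

lemma v_cont: "continuous_on UNIV v"
  using v_deriv has_derivative_continuous continuous_at_imp_continuous_on by blast

lemma v_y_cont: "continuous_on UNIV v_y"
  unfolding v_y_def by (intro continuous_intros v'_cont)

lemma v_\<theta>_cont: "continuous_on UNIV v_\<theta>"
  unfolding v_\<theta>_def by (intro continuous_intros v'_cont)

lemma grad_norm_eq: "grad_norm (v' x) = sqrt ((v_y x)\<^sup>2 + (v_\<theta> x)\<^sup>2)"
  by (simp add: grad_norm_def v_y_def v_\<theta>_def)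

lemma grad_norm_cont: "continuous_on UNIV (\<lambda>x. grad_norm (v' x))"
  unfolding grad_norm_eq by (intro continuous_intros v_y_cont v_\<theta>_cont)

lemma v_P_has_real_derivative_t:
  "((\<lambda>t. v (P t \<theta>)) has_real_derivative h \<theta> * v_y (P t \<theta>)) (at t within S)"
  using has_real_derivative_comp_curve[OF v_deriv P_has_vector_derivative_t[of \<theta> t S]]
    blinfun.scaleR_right[of "v' (P t \<theta>)" "h \<theta>" "(1, 0)"]
  by (simp add: v_y_def)

definition deriv_h_v_P :: "real \<Rightarrow> real \<Rightarrow> real" where
  "deriv_h_v_P t \<theta> = (\<psi>2' \<theta> - \<psi>1' \<theta>) * v (P t \<theta>)
    + h \<theta> * (((1 - t) * \<psi>1' \<theta> + t * \<psi>2' \<theta>) * v_y (P t \<theta>) + v_\<theta> (P t \<theta>))"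

lemma h_v_P_has_real_derivative_\<theta>:
  assumes "\<theta> \<in> {C..D}"
  shows "((\<lambda>\<theta>. h \<theta> * v (P t \<theta>)) has_real_derivative deriv_h_v_P t \<theta>) (at \<theta> within {C..D})"
proof -
  define k where "k = (1 - t) * \<psi>1' \<theta> + t * \<psi>2' \<theta>"
  have "blinfun_apply (v' (P t \<theta>)) (k, 1) = k * v_y (P t \<theta>) + v_\<theta> (P t \<theta>)"
    using blinfun.scaleR_right[of "v' (P t \<theta>)" k "(1, 0)"]
      blinfun.add_right[of "v' (P t \<theta>)" "(k, 0)" "(0, 1)"]
    by (simp add: v_y_def v_\<theta>_def)
  then have "((\<lambda>\<theta>. v (P t \<theta>)) has_real_derivative k * v_y (P t \<theta>) + v_\<theta> (P t \<theta>))
      (at \<theta> within {C..D})"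
    using has_real_derivative_comp_curve[OF v_deriv P_has_vector_derivative_\<theta>[OF assms, of t]]
    by (simp add: k_def)
  from DERIV_mult[OF h_has_real_derivative[OF assms] this] show ?thesis
    unfolding deriv_h_v_P_def k_def by (rule DERIV_cong) (simp add: algebra_simps)
qed

lemma deriv_h_v_P_cont: "continuous_on {C..D} (deriv_h_v_P t)"
  unfolding deriv_h_v_P_def
  by (intro continuous_intros \<psi>1'_cont \<psi>2'_cont h_cont continuous_on_P_slice_\<theta> v_cont v_y_cont v_\<theta>_cont)

lemma abs_deriv_h_v_P_le:
  assumes t: "t \<in> {0..1}" and \<theta>: "\<theta> \<in> {C..D}"
  shows "\<bar>deriv_h_v_P t \<theta>\<bar>
    \<le> 2 * M \<theta> * \<bar>v (P t \<theta>)\<bar> + h \<theta> * (M \<theta> * \<bar>v_y (P t \<theta>)\<bar> + \<bar>v_\<theta> (P t \<theta>)\<bar>)"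
proof -
  define k where "k = (1 - t) * \<psi>1' \<theta> + t * \<psi>2' \<theta>"
  have "\<bar>\<psi>2' \<theta> - \<psi>1' \<theta>\<bar> \<le> 2 * M \<theta>"
    by (auto simp: M_def abs_if max_def)
  moreover have "\<bar>k * v_y (P t \<theta>) + v_\<theta> (P t \<theta>)\<bar> \<le> \<bar>k\<bar> * \<bar>v_y (P t \<theta>)\<bar> + \<bar>v_\<theta> (P t \<theta>)\<bar>"
    by (metis abs_mult abs_triangle_ineq)
  moreover have "\<bar>k\<bar> * \<bar>v_y (P t \<theta>)\<bar> \<le> M \<theta> * \<bar>v_y (P t \<theta>)\<bar>"
    using abs_convex_slope_le_M[OF t] unfolding k_def by (intro mult_right_mono) auto
  ultimately have "\<bar>\<psi>2' \<theta> - \<psi>1' \<theta>\<bar> * \<bar>v (P t \<theta>)\<bar> + h \<theta> * \<bar>k * v_y (P t \<theta>) + v_\<theta> (P t \<theta>)\<bar>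
      \<le> 2 * M \<theta> * \<bar>v (P t \<theta>)\<bar> + h \<theta> * (M \<theta> * \<bar>v_y (P t \<theta>)\<bar> + \<bar>v_\<theta> (P t \<theta>)\<bar>)"
    using h_pos[OF \<theta>] by (intro add_mono mult_left_mono mult_right_mono) auto
  moreover have "\<bar>deriv_h_v_P t \<theta>\<bar>
      \<le> \<bar>\<psi>2' \<theta> - \<psi>1' \<theta>\<bar> * \<bar>v (P t \<theta>)\<bar> + h \<theta> * \<bar>k * v_y (P t \<theta>) + v_\<theta> (P t \<theta>)\<bar>"
    unfolding deriv_h_v_P_def k_def using h_pos[OF \<theta>] by (metis abs_mult abs_of_pos abs_triangle_ineq)
  ultimately show ?thesis
    by linarith
qed

text \<open>The first summand is the averaging term of \<open>abs_endpoints_le_integral\<close> on [C, D],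
  the others majorise \<open>\<bar>deriv_h_v_P t \<theta>\<bar>\<close>.\<close>
definition side_density :: "real \<Rightarrow> real \<Rightarrow> real" where
  "side_density t \<theta> = 2 / (D - C) * h \<theta> * \<bar>v (P t \<theta>)\<bar> + 2 * M \<theta> * \<bar>v (P t \<theta>)\<bar>
    + h \<theta> * (M \<theta> * \<bar>v_y (P t \<theta>)\<bar> + \<bar>v_\<theta> (P t \<theta>)\<bar>)"

lemma side_density_cont:
  "continuous_on ({0..1} \<times> {C..D}) (\<lambda>p. side_density (fst p) (snd p))"
  unfolding side_density_def
  by (intro continuous_intros continuous_on_rectangle_P v_cont v_y_cont v_\<theta>_cont
      continuous_on_rectangle_snd h_cont M_cont)

lemma side_traces_le_slice:
  assumes t: "t \<in> {0..1}"
  shows "h C * \<bar>v (P t C)\<bar> + h D * \<bar>v (P t D)\<bar> \<le> integral {C..D} (side_density t)"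
proof -
  define g where "g \<theta> = 2 * M \<theta> * \<bar>v (P t \<theta>)\<bar> + h \<theta> * (M \<theta> * \<bar>v_y (P t \<theta>)\<bar> + \<bar>v_\<theta> (P t \<theta>)\<bar>)"
    for \<theta>
  have hv_int: "(\<lambda>\<theta>. 2 / (D - C) * (h \<theta> * \<bar>v (P t \<theta>)\<bar>)) integrable_on {C..D}"
    by (intro integrable_continuous_interval continuous_intros h_cont continuous_on_P_slice_\<theta> v_cont)
  have g_int: "g integrable_on {C..D}"
    unfolding g_def
    by (intro integrable_continuous_interval continuous_intros M_cont h_cont continuous_on_P_slice_\<theta>
        v_cont v_y_cont v_\<theta>_cont)
  have "0 < h C" and "0 < h D"
    using CD h_pos by auto
  then have "h C * \<bar>v (P t C)\<bar> + h D * \<bar>v (P t D)\<bar> = \<bar>h C * v (P t C)\<bar> + \<bar>h D * v (P t D)\<bar>"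
    by (simp add: abs_mult)
  also have "\<dots> \<le> 2 / (D - C) * integral {C..D} (\<lambda>\<theta>. \<bar>h \<theta> * v (P t \<theta>)\<bar>)
      + integral {C..D} (\<lambda>\<theta>. \<bar>deriv_h_v_P t \<theta>\<bar>)"
    using CD h_v_P_has_real_derivative_\<theta> deriv_h_v_P_cont by (rule abs_endpoints_le_integral)
  also have "integral {C..D} (\<lambda>\<theta>. \<bar>h \<theta> * v (P t \<theta>)\<bar>) = integral {C..D} (\<lambda>\<theta>. h \<theta> * \<bar>v (P t \<theta>)\<bar>)"
    by (intro integral_cong) (simp add: abs_mult abs_of_pos h_pos)
  also have "integral {C..D} (\<lambda>\<theta>. \<bar>deriv_h_v_P t \<theta>\<bar>) \<le> integral {C..D} g"
    using abs_deriv_h_v_P_le[OF t]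
    by (intro integral_le g_int integrable_continuous_interval continuous_intros deriv_h_v_P_cont)
      (simp add: g_def)
  also have "2 / (D - C) * integral {C..D} (\<lambda>\<theta>. h \<theta> * \<bar>v (P t \<theta>)\<bar>) + integral {C..D} g
      = integral {C..D} (\<lambda>\<theta>. 2 / (D - C) * (h \<theta> * \<bar>v (P t \<theta>)\<bar>) + g \<theta>)"
    using hv_int g_int by (simp only: integral_add integral_mult_right)
  also have "\<dots> = integral {C..D} (side_density t)"
    by (rule integral_cong) (simp add: side_density_def g_def algebra_simps)
  finally show ?thesis
    by simp
qed

lemma side_traces_le:
  "integral {\<psi>1 C..\<psi>2 C} (\<lambda>y. \<bar>v (y, C)\<bar>) + integral {\<psi>1 D..\<psi>2 D} (\<lambda>y. \<bar>v (y, D)\<bar>)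
    \<le> integral {C..D} (\<lambda>\<theta>. integral {0..1} (\<lambda>t. side_density t \<theta>))"
proof -
  have side_eq: "integral {\<psi>1 c..\<psi>2 c} (\<lambda>y. \<bar>v (y, c)\<bar>) = integral {0..1} (\<lambda>t. h c * \<bar>v (P t c)\<bar>)"
    if c: "c \<in> {C..D}" for c
  proof -
    have "continuous_on {\<psi>1 c..\<psi>2 c} (\<lambda>y. \<bar>v (y, c)\<bar>)"
      by (intro continuous_intros continuous_on_compose2[OF v_cont]) auto
    with h_pos[OF c] show ?thesis
      by (subst integral_Icc_rescale_unit) (auto simp: P_def h_def)
  qed
  have CD_mem: "C \<in> {C..D}" "D \<in> {C..D}"
    using CD by auto
  have slice_cont: "continuous_on {0..1} (\<lambda>t. h c * \<bar>v (P t c)\<bar>)" for c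
    by (intro continuous_intros continuous_on_P_slice_t v_cont)
  have "integral {\<psi>1 C..\<psi>2 C} (\<lambda>y. \<bar>v (y, C)\<bar>) + integral {\<psi>1 D..\<psi>2 D} (\<lambda>y. \<bar>v (y, D)\<bar>)
      = integral {0..1} (\<lambda>t. h C * \<bar>v (P t C)\<bar> + h D * \<bar>v (P t D)\<bar>)"
    unfolding side_eq[OF CD_mem(1)] side_eq[OF CD_mem(2)]
    by (intro integral_add[symmetric] integrable_continuous_interval slice_cont)
  also have "\<dots> \<le> integral {0..1} (\<lambda>t. integral {C..D} (side_density t))"
    by (intro integral_le side_traces_le_slice integrable_continuous_interval continuous_intros
        slice_cont continuous_on_integral_Icc_snd side_density_cont)
  also have "\<dots> = integral {C..D} (\<lambda>\<theta>. integral {0..1} (\<lambda>t. side_density t \<theta>))"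
    using side_density_cont by (rule integral_Icc_swap)
  finally show ?thesis .
qed

definition graph_trace :: "real \<Rightarrow> real" where
  "graph_trace \<theta> = \<bar>v (\<psi>1 \<theta>, \<theta>)\<bar> * sqrt ((\<psi>1' \<theta>)\<^sup>2 + 1) + \<bar>v (\<psi>2 \<theta>, \<theta>)\<bar> * sqrt ((\<psi>2' \<theta>)\<^sup>2 + 1)"

lemma graph_trace_cont: "continuous_on {C..D} graph_trace"
  unfolding graph_trace_def
  by (intro continuous_intros \<psi>1'_cont \<psi>2'_cont \<psi>1_cont \<psi>2_cont continuous_on_compose2[OF v_cont]) auto

lemma boundary_integral_abs_eq:
  "boundary_integral \<psi>1 \<psi>2 C D (\<lambda>x. \<bar>v x\<bar>)
    = integral {C..D} graph_trace
      + (integral {\<psi>1 C..\<psi>2 C} (\<lambda>y. \<bar>v (y, C)\<bar>) + integral {\<psi>1 D..\<psi>2 D} (\<lambda>y. \<bar>v (y, D)\<bar>))"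
  unfolding boundary_integral_eq graph_trace_def
  by (subst integral_add) (auto intro!: integrable_continuous_interval continuous_intros
      \<psi>1'_cont \<psi>2'_cont \<psi>1_cont \<psi>2_cont continuous_on_compose2[OF v_cont])

lemma graph_trace_le:
  assumes \<theta>: "\<theta> \<in> {C..D}"
  shows "graph_trace \<theta>
    \<le> sqrt (1 + (M \<theta>)\<^sup>2) * integral {0..1} (\<lambda>t. 2 * \<bar>v (P t \<theta>)\<bar> + h \<theta> * \<bar>v_y (P t \<theta>)\<bar>)"
proof -
  define A where "A = sqrt (1 + (M \<theta>)\<^sup>2)"
  have "(\<psi>1' \<theta>)\<^sup>2 \<le> (M \<theta>)\<^sup>2" and "(\<psi>2' \<theta>)\<^sup>2 \<le> (M \<theta>)\<^sup>2"
    unfolding M_def by (simp_all add: abs_le_square_iff[symmetric])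
  then have "sqrt ((\<psi>1' \<theta>)\<^sup>2 + 1) \<le> A" and "sqrt ((\<psi>2' \<theta>)\<^sup>2 + 1) \<le> A"
    unfolding A_def by (simp_all add: add.commute)
  then have "graph_trace \<theta> \<le> \<bar>v (\<psi>1 \<theta>, \<theta>)\<bar> * A + \<bar>v (\<psi>2 \<theta>, \<theta>)\<bar> * A"
    unfolding graph_trace_def by (intro add_mono mult_left_mono) auto
  also have "\<dots> = A * (\<bar>v (P 0 \<theta>)\<bar> + \<bar>v (P 1 \<theta>)\<bar>)"
    by (simp add: P_def h_def algebra_simps)
  also have "\<bar>v (P 0 \<theta>)\<bar> + \<bar>v (P 1 \<theta>)\<bar>
      \<le> 2 / (1 - 0) * integral {0..1} (\<lambda>t. \<bar>v (P t \<theta>)\<bar>) + integral {0..1} (\<lambda>t. \<bar>h \<theta> * v_y (P t \<theta>)\<bar>)"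
    by (intro abs_endpoints_le_integral v_P_has_real_derivative_t continuous_intros
        continuous_on_P_slice_t v_y_cont) auto
  also have "\<dots> = integral {0..1} (\<lambda>t. 2 * \<bar>v (P t \<theta>)\<bar> + h \<theta> * \<bar>v_y (P t \<theta>)\<bar>)"
  proof -
    have "(\<lambda>t. 2 * \<bar>v (P t \<theta>)\<bar>) integrable_on {0..1}"
      and "(\<lambda>t. h \<theta> * \<bar>v_y (P t \<theta>)\<bar>) integrable_on {0..1}"
      by (intro integrable_continuous_interval continuous_intros continuous_on_P_slice_t v_cont v_y_cont)+
    then show ?thesis
      using h_pos[OF \<theta>] by (simp add: integral_add abs_mult)
  qed
  finally show ?thesis
    unfolding A_def by (simp add: mult_left_mono)
qed

lemma weighted_partials_le_grad_norm:
  assumes "0 \<le> m" and "m \<le> Mi"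
  shows "(sqrt (1 + m\<^sup>2) + m) * \<bar>v_y x\<bar> + \<bar>v_\<theta> x\<bar>
    \<le> sqrt 2 * (sqrt (1 + Mi\<^sup>2) + Mi) * grad_norm (v' x)"
proof -
  define B where "B = sqrt (1 + Mi\<^sup>2) + Mi"
  have "1 \<le> sqrt (1 + Mi\<^sup>2)"
    by simp
  then have B: "1 \<le> B"
    using assms unfolding B_def by linarith
  have "m\<^sup>2 \<le> Mi\<^sup>2"
    using assms by (intro power_mono) auto
  then have "sqrt (1 + m\<^sup>2) + m \<le> B"
    using assms unfolding B_def by (intro add_mono) simp_all
  then have "(sqrt (1 + m\<^sup>2) + m) * \<bar>v_y x\<bar> + \<bar>v_\<theta> x\<bar> \<le> B * \<bar>v_y x\<bar> + \<bar>v_\<theta> x\<bar>"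
    by (simp add: mult_right_mono)
  also have "\<dots> \<le> sqrt 2 * B * grad_norm (v' x)"
    using weighted_abs_add_le_sqrt2_norm[OF B] by (simp add: grad_norm_eq)
  finally show ?thesis
    unfolding B_def .
qed

lemma density_le:
  fixes S Mi :: real
  assumes \<theta>: "\<theta> \<in> {C..D}"
    and S: "(sqrt (1 + (M \<theta>)\<^sup>2) + 2 * M \<theta>) / h \<theta> \<le> S"
    and Mi: "M \<theta> \<le> Mi"
  shows "sqrt (1 + (M \<theta>)\<^sup>2) * (2 * \<bar>v (P t \<theta>)\<bar> + h \<theta> * \<bar>v_y (P t \<theta>)\<bar>) + side_density t \<theta>
    \<le> h \<theta> * (2 * (1 / (D - C) + S) * \<bar>v (P t \<theta>)\<bar>
      + sqrt 2 * (sqrt (1 + Mi\<^sup>2) + Mi) * grad_norm (v' (P t \<theta>)))"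
proof -
  define A m w y z where "A = sqrt (1 + (M \<theta>)\<^sup>2)" and "m = M \<theta>" and "w = \<bar>v (P t \<theta>)\<bar>"
    and "y = v_y (P t \<theta>)" and "z = v_\<theta> (P t \<theta>)"
  define G where "G = sqrt 2 * (sqrt (1 + Mi\<^sup>2) + Mi) * grad_norm (v' (P t \<theta>))"
  have h: "0 < h \<theta>"
    using h_pos[OF \<theta>] .
  have m: "0 \<le> m"
    by (simp add: m_def M_def)
  have "A + 2 * m \<le> S * h \<theta>"
    using S h by (simp add: A_def m_def pos_divide_le_eq)
  then have v_term: "2 * (A + m) * w \<le> 2 * (S * h \<theta>) * w"
    using m by (intro mult_right_mono) (auto simp: w_def)
  have "(A + m) * \<bar>y\<bar> + \<bar>z\<bar> \<le> G"
    using weighted_partials_le_grad_norm[OF m Mi[folded m_def]] unfolding A_def m_def y_def z_def G_def .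
  then have grad_term: "h \<theta> * ((A + m) * \<bar>y\<bar> + \<bar>z\<bar>) \<le> h \<theta> * G"
    using h by (intro mult_left_mono) auto
  have "A * (2 * w + h \<theta> * \<bar>y\<bar>) + side_density t \<theta>
      = 2 * (A + m) * w + 2 / (D - C) * h \<theta> * w + h \<theta> * ((A + m) * \<bar>y\<bar> + \<bar>z\<bar>)"
    by (simp add: side_density_def A_def m_def w_def y_def z_def algebra_simps)
  moreover have "h \<theta> * (2 * (1 / (D - C) + S) * w + G) = 2 * (S * h \<theta>) * w + 2 / (D - C) * h \<theta> * w + h \<theta> * G"
    by (simp add: algebra_simps)
  ultimately show ?thesis
    using v_term grad_term unfolding A_def w_def y_def G_def by linarith
qed

lemma trace_density_le:
  fixes S Mi :: real
  defines "F \<equiv> \<lambda>x. 2 * (1 / (D - C) + S) * \<bar>v x\<bar> + sqrt 2 * (sqrt (1 + Mi\<^sup>2) + Mi) * grad_norm (v' x)"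
  assumes \<theta>: "\<theta> \<in> {C..D}"
    and S: "(sqrt (1 + (M \<theta>)\<^sup>2) + 2 * M \<theta>) / h \<theta> \<le> S"
    and Mi: "M \<theta> \<le> Mi"
  shows "graph_trace \<theta> + integral {0..1} (\<lambda>t. side_density t \<theta>)
    \<le> h \<theta> * integral {0..1} (\<lambda>t. F (P t \<theta>))"
proof -
  define G where "G t = sqrt (1 + (M \<theta>)\<^sup>2) * (2 * \<bar>v (P t \<theta>)\<bar> + h \<theta> * \<bar>v_y (P t \<theta>)\<bar>)" for t
  have G_cont: "continuous_on {0..1} G"
    unfolding G_def by (intro continuous_intros continuous_on_P_slice_t v_cont v_y_cont)
  have side_cont: "continuous_on {0..1} (\<lambda>t. side_density t \<theta>)"
    using side_density_cont \<theta> by (rule continuous_on_Icc_slice)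
  have F_cont: "continuous_on UNIV F"
    unfolding F_def by (intro continuous_intros v_cont grad_norm_cont)
  have "graph_trace \<theta> \<le> integral {0..1} G"
    unfolding G_def using graph_trace_le[OF \<theta>] by simp
  then have "graph_trace \<theta> + integral {0..1} (\<lambda>t. side_density t \<theta>)
      \<le> integral {0..1} (\<lambda>t. G t + side_density t \<theta>)"
    by (simp add: integral_add integrable_continuous_interval G_cont side_cont)
  also have "\<dots> \<le> integral {0..1} (\<lambda>t. h \<theta> * F (P t \<theta>))"
  proof (rule integral_le)
    show "(\<lambda>t. G t + side_density t \<theta>) integrable_on {0..1}"
      by (intro integrable_continuous_interval continuous_intros G_cont side_cont)
    show "(\<lambda>t. h \<theta> * F (P t \<theta>)) integrable_on {0..1}"
      by (intro integrable_continuous_interval continuous_intros continuous_on_P_slice_t F_cont)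
    show "G t + side_density t \<theta> \<le> h \<theta> * F (P t \<theta>)" if "t \<in> {0..1}" for t
      using density_le[OF \<theta> S Mi] by (simp add: G_def F_def)
  qed
  finally show ?thesis
    by simp
qed

lemma boundary_integral_le:
  fixes S Mi :: real
  assumes S: "\<And>\<theta>. \<theta> \<in> {C..D} \<Longrightarrow> (sqrt (1 + (M \<theta>)\<^sup>2) + 2 * M \<theta>) / h \<theta> \<le> S"
    and Mi: "\<And>\<theta>. \<theta> \<in> {C..D} \<Longrightarrow> M \<theta> \<le> Mi"
  shows "boundary_integral \<psi>1 \<psi>2 C D (\<lambda>x. \<bar>v x\<bar>)
    \<le> 2 * (1 / (D - C) + S) * (LINT x:region \<psi>1 \<psi>2 C D|lborel. \<bar>v x\<bar>)
      + sqrt 2 * (sqrt (1 + Mi\<^sup>2) + Mi) * (LINT x:region \<psi>1 \<psi>2 C D|lborel. grad_norm (v' x))"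
    (is "_ \<le> ?K1 * _ + ?K2 * _")
proof -
  define F where "F x = ?K1 * \<bar>v x\<bar> + ?K2 * grad_norm (v' x)" for x
  have F_cont: "continuous_on UNIV F"
    unfolding F_def by (intro continuous_intros v_cont grad_norm_cont)
  have side_cont: "continuous_on {C..D} (\<lambda>\<theta>. integral {0..1} (\<lambda>t. side_density t \<theta>))"
    using side_density_cont by (rule continuous_on_integral_Icc_fst)
  have "boundary_integral \<psi>1 \<psi>2 C D (\<lambda>x. \<bar>v x\<bar>)
      \<le> integral {C..D} graph_trace + integral {C..D} (\<lambda>\<theta>. integral {0..1} (\<lambda>t. side_density t \<theta>))"
    unfolding boundary_integral_abs_eq using side_traces_le by simp
  also have "\<dots> = integral {C..D} (\<lambda>\<theta>. graph_trace \<theta> + integral {0..1} (\<lambda>t. side_density t \<theta>))"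
    by (simp add: integral_add integrable_continuous_interval graph_trace_cont side_cont)
  also have "\<dots> \<le> integral {C..D} (\<lambda>\<theta>. h \<theta> * integral {0..1} (\<lambda>t. F (P t \<theta>)))"
  proof (rule integral_le)
    show "(\<lambda>\<theta>. graph_trace \<theta> + integral {0..1} (\<lambda>t. side_density t \<theta>)) integrable_on {C..D}"
      by (intro integrable_continuous_interval continuous_intros graph_trace_cont side_cont)
    show "(\<lambda>\<theta>. h \<theta> * integral {0..1} (\<lambda>t. F (P t \<theta>))) integrable_on {C..D}"
      by (intro integrable_continuous_interval continuous_intros h_cont continuous_on_integral_Icc_fst
          continuous_on_rectangle_P F_cont)
    show "graph_trace \<theta> + integral {0..1} (\<lambda>t. side_density t \<theta>) \<le> h \<theta> * integral {0..1} (\<lambda>t. F (P t \<theta>))"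
      if "\<theta> \<in> {C..D}" for \<theta>
      using trace_density_le[OF that S[OF that] Mi[OF that]] by (simp add: F_def)
  qed
  also have "\<dots> = (LINT x:region \<psi>1 \<psi>2 C D|lborel. F x)"
    by (rule integral_region_P[OF F_cont, symmetric])
  also have "\<dots> = ?K1 * (LINT x:region \<psi>1 \<psi>2 C D|lborel. \<bar>v x\<bar>)
      + ?K2 * (LINT x:region \<psi>1 \<psi>2 C D|lborel. grad_norm (v' x))"
    unfolding F_def by (intro set_integral_region_lincomb continuous_intros v_cont grad_norm_cont)
  finally show ?thesis .
qed

lemma boundary_trace_inequality:
  "boundary_integral \<psi>1 \<psi>2 C D (\<lambda>x. \<bar>v x\<bar>)
    \<le> 2 * (1 / (D - C) + (SUP \<theta>\<in>{C..D}. \<bar>(sqrt (1 + (M \<theta>)\<^sup>2) + 2 * M \<theta>) / h \<theta>\<bar>))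
        * (LINT x:region \<psi>1 \<psi>2 C D|lborel. \<bar>v x\<bar>)
      + sqrt 2 * (sqrt (1 + (SUP \<theta>\<in>{C..D}. \<bar>M \<theta>\<bar>)\<^sup>2) + (SUP \<theta>\<in>{C..D}. \<bar>M \<theta>\<bar>))
        * (LINT x:region \<psi>1 \<psi>2 C D|lborel. grad_norm (v' x))"
proof (rule boundary_integral_le)
  show "(sqrt (1 + (M \<theta>)\<^sup>2) + 2 * M \<theta>) / h \<theta>
      \<le> (SUP \<theta>\<in>{C..D}. \<bar>(sqrt (1 + (M \<theta>)\<^sup>2) + 2 * M \<theta>) / h \<theta>\<bar>)" if "\<theta> \<in> {C..D}" for \<theta>
    using h_pos that
    by (intro le_SUP_abs_continuous_on_Icc continuous_intros M_cont h_cont) force+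
  show "M \<theta> \<le> (SUP \<theta>\<in>{C..D}. \<bar>M \<theta>\<bar>)" if "\<theta> \<in> {C..D}" for \<theta>
    using M_cont that by (rule le_SUP_abs_continuous_on_Icc)
qed

end

theorem theoremB1:
  fixes C D :: real
    and \<psi>1 \<psi>2 \<psi>1' \<psi>2' :: "real \<Rightarrow> real"
    and v :: "real \<times> real \<Rightarrow> real"
    and v' :: "real \<times> real \<Rightarrow> ((real \<times> real) \<Rightarrow>\<^sub>L real)"
  assumes CD: "C < D"
    and d1: "\<And>\<theta>. \<theta> \<in> {C..D} \<Longrightarrow> (\<psi>1 has_real_derivative \<psi>1' \<theta>) (at \<theta> within {C..D})"
    and c1: "continuous_on {C..D} \<psi>1'"
    and d2: "\<And>\<theta>. \<theta> \<in> {C..D} \<Longrightarrow> (\<psi>2 has_real_derivative \<psi>2' \<theta>) (at \<theta> within {C..D})"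
    and c2: "continuous_on {C..D} \<psi>2'"
    and lt: "\<And>\<theta>. \<theta> \<in> {C..D} \<Longrightarrow> \<psi>1 \<theta> < \<psi>2 \<theta>"
    and dv: "\<And>x. (v has_derivative blinfun_apply (v' x)) (at x)"
    and cv: "continuous_on UNIV v'"
  defines "M \<equiv> (\<lambda>\<theta>. max \<bar>\<psi>1' \<theta>\<bar> \<bar>\<psi>2' \<theta>\<bar>)"
    and "a \<equiv> region \<psi>1 \<psi>2 C D"
  shows "boundary_integral \<psi>1 \<psi>2 C D (\<lambda>x. \<bar>v x\<bar>)
     \<le> 2 * (1 / (D - C)
            + (SUP \<theta>\<in>{C..D}. \<bar>(sqrt (1 + (M \<theta>)\<^sup>2) + 2 * M \<theta>) / (\<psi>2 \<theta> - \<psi>1 \<theta>)\<bar>))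
          * (LINT x:a|lborel. \<bar>v x\<bar>)
       + sqrt 2 * (sqrt (1 + (SUP \<theta>\<in>{C..D}. \<bar>M \<theta>\<bar>)\<^sup>2) + (SUP \<theta>\<in>{C..D}. \<bar>M \<theta>\<bar>))
          * (LINT x:a|lborel. grad_norm (v' x))"
proof -
  have strip: "C1_strip C D \<psi>1 \<psi>2 \<psi>1' \<psi>2'"
    using CD d1 c1 d2 c2 lt by unfold_locales
  moreover have "C1_strip_function_axioms v v'"
    using dv cv by unfold_locales
  ultimately have "C1_strip_function C D \<psi>1 \<psi>2 \<psi>1' \<psi>2' v v'"
    by (rule C1_strip_function.intro)
  note bound = C1_strip_function.boundary_trace_inequality[OF this,
      unfolded C1_strip.M_def[OF strip] C1_strip.h_def[OF strip]]
  show ?thesis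
    unfolding M_def a_def by (rule bound)
qed

end
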